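(* For every semistandard hook-valued tableau $T$ of shape $\lambda$, the recording tableau $Q(T)$ of the uncrowding map $\mathcal U(T)=(P(T),Q(T))$ is a column-flagged increasing tableau.
   Context: French notation: row $1$ is the bottom row, rows numbered upward, columns left to right; cell $(r,c)$ is in row $r$, column $c$. A semistandard tableau of hook shape consists of a hook entry $x$, a leg $\ell_1<\dots<\ell_p$ above $x$ with $x<\ell_1$, and an arm $a_1\le\dots\le a_q$ to the right of $x$ with $x\le a_1$ ($p,q\ge0$, positive integers). A (semistandard) hook-valued tableau (HVT) of partition shape $\lambda$ is a filling of the cells of $\lambda$ by such hook tableaux with $\max(A)\le\min(B)$ whenever the cell of $A$ is left of that of $B$ in the same row, and $\max(A)<\min(C)$ whenever the cell of $A$ is below that of $C$ in the same column. Arm excess = total number of arm entries. A column-flagged increasing tableau of shape $\mu/\lambda$ (where $\lambda\subseteq\mu$ are partitions whose first columns have equal length) is a filling of the cells of $\mu/\lambda$ by positive integers, strictly increasing along rows and along columns, such that every entry in column $j$ is at most $j-1$ (i.e. its transpose is a flagged increasing tableau). Uncrowding bumping $\mathcal V_b$: if arm excess of $T$ is $0$, $\mathcal V_b(T)=T$. Otherwise let $c$ be the largest index of a column containing a cell with nonempty arm; among such cells in column $c$ let $(r,c)$ be the one whose arm contains the largest value. Let $a$ be the largest arm entry of $(r,c)$, $\ell$ its largest leg entry, and $(a,\ell]\cap\mathsf L_T(r,c)$ the set of leg entries $x$ of $(r,c)$ with $a<x\le\ell$. In column $c+1$ find the smallest entry $\ge a$. If none exists, attach a new empty cell on top of column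 $c+1$, with row $\tilde r$, and let $k$ be empty; otherwise let $k$ be this entry and $(\tilde r,c+1)$ its cell. (a) If $\tilde r\ne r$: remove $a$ from the arm of $(r,c)$, put $a$ in the position of $k$ in $(\tilde r,c+1)$ (as hook entry if the cell is new), append $k$ (if nonempty) to the arm of $(\tilde r,c+1)$. (b) If $\tilde r=r$: move $(a,\ell]\cap\mathsf L_T(r,c)$ from the leg of $(r,c)$ into the leg of $(r,c+1)$, remove $a$ from the arm of $(r,c)$, replace the hook entry of $(r,c+1)$ by $a$, append $k$ (if nonempty) to the arm of $(r,c+1)$. Uncrowding insertion: $\mathcal V(T)=\mathcal V_b^d(T)$ where $d\ge1$ is minimal such that $\mathsf{shape}(\mathcal V_b^d(T))\neq\mathsf{shape}(\mathcal V_b^{d-1}(T))$ or $\mathcal V_b^d(T)=\mathcal V_b^{d-1}(T)$. Uncrowding map: for $T\in\mathsf{HVT}(\lambda)$ with arm excess $\alpha$, set $P_0=T$ and $Q_0$ the empty tableau of shape $\lambda/\lambda$; for $1\le i\le\alpha$ let $P_i=\mathcal V(P_{i-1})$, let $c$ be the index of the rightmost column of $P_{i-1}$ containing a cell with nonzero arm excess and $\tilde c$ the column of the cell $\mathsf{shape}(P_i)/\mathsf{shape}(P_{i-1})$; $Q_i$ is $Q_{i-1}$ with this cell added and filled with $\tilde c-c$. Then $\mathcal U(T)=(P(T),Q(T)):=(P_\alpha,Q_\alpha)$. *)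

theory Defs
  imports Main "HOL-Library.Multiset"
begin

text \<open>A semistandard hook tableau: hook entry x, leg l1 < ... < lp (a finite set, all > x),
  arm a1 \<le> ... \<le> aq (a multiset, all \<ge> x). Entries are positive integers.\<close>

record hook =
  hx   :: nat
  hleg :: "nat set"
  harm :: "nat multiset"

definition valid_hook :: "hook \<Rightarrow> bool" where
  "valid_hook h \<longleftrightarrow> 0 < hx h \<and> finite (hleg h) \<and> (\<forall>l\<in>hleg h. hx h < l)
      \<and> (\<forall>a\<in>#harm h. hx h \<le> a)"

definition hook_entries :: "hook \<Rightarrow> nat set" where
  "hook_entries h = insert (hx h) (hleg h \<union> set_mset (harm h))"

text \<open>Cells are (row, column), 1-indexed, French notation (row 1 at the bottom).\<close>
type_synonym tab = "nat \<times> nat \<Rightarrow> hook option"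

definition partition :: "nat list \<Rightarrow> bool" where
  "partition lam \<longleftrightarrow> sorted_wrt (\<ge>) lam \<and> (\<forall>x\<in>set lam. 0 < x)"

definition young_cells :: "nat list \<Rightarrow> (nat \<times> nat) set" where
  "young_cells lam = {(r, c). 1 \<le> r \<and> r \<le> length lam \<and> 1 \<le> c \<and> c \<le> lam ! (r - 1)}"

definition is_HVT :: "nat list \<Rightarrow> tab \<Rightarrow> bool" where
  "is_HVT lam T \<longleftrightarrow> dom T = young_cells lam
     \<and> (\<forall>p h. T p = Some h \<longrightarrow> valid_hook h)
     \<and> (\<forall>r c c' A B. T (r, c) = Some A \<longrightarrow> T (r, c') = Some B \<longrightarrow> c < c'
           \<longrightarrow> Max (hook_entries A) \<le> Min (hook_entries B))
     \<and> (\<forall>r r' c A C. T (r, c) = Some A \<longrightarrow> T (r', c) = Some C \<longrightarrow> r < r'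
           \<longrightarrow> Max (hook_entries A) < Min (hook_entries C))"

definition arm_excess :: "tab \<Rightarrow> nat" where
  "arm_excess T = (\<Sum>p\<in>dom T. size (harm (the (T p))))"

definition cells_with_arm :: "tab \<Rightarrow> (nat \<times> nat) set" where
  "cells_with_arm T = {p \<in> dom T. harm (the (T p)) \<noteq> {#}}"

definition maxarm :: "hook \<Rightarrow> nat" where
  "maxarm h = Max (set_mset (harm h))"

definition bump_col :: "tab \<Rightarrow> nat" where
  "bump_col T = Max (snd ` cells_with_arm T)"

definition bump_row :: "tab \<Rightarrow> nat" where
  "bump_row T = (let c = bump_col T; S = {r. (r, c) \<in> cells_with_arm T};
                     M = Max ((\<lambda>r. maxarm (the (T (r, c)))) ` S)
                 in Max {r \<in> S. maxarm (the (T (r, c))) = M})"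

definition col_entries :: "tab \<Rightarrow> nat \<Rightarrow> nat set" where
  "col_entries T j = (\<Union>{hook_entries h | h r. T (r, j) = Some h})"

definition col_height :: "tab \<Rightarrow> nat \<Rightarrow> nat" where
  "col_height T j = card {r. (r, j) \<in> dom T}"

text \<open>Put a in the position of k in g, then append k to the arm (case (a)).
  If k occurs in several positions of g, the hook position is preferred, then the leg.\<close>
definition replace_and_append :: "hook \<Rightarrow> nat \<Rightarrow> nat \<Rightarrow> hook" where
  "replace_and_append g k a =
     (if hx g = k then g\<lparr>hx := a, harm := harm g + {#k#}\<rparr>
      else if k \<in> hleg g then g\<lparr>hleg := insert a (hleg g - {k}), harm := harm g + {#k#}\<rparr>
      else g\<lparr>harm := harm g - {#k#} + {#a#} + {#k#}\<rparr>)"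

definition bump :: "tab \<Rightarrow> tab" where
  "bump T =
    (if arm_excess T = 0 then T else
     (let c = bump_col T; r = bump_row T; h = the (T (r, c)); a = maxarm h;
          moved = {x \<in> hleg h. a < x \<and> x \<le> Max (hleg h)};
          h' = h\<lparr>harm := harm h - {#a#}\<rparr>;
          E = {x \<in> col_entries T (c + 1). a \<le> x};
          kopt = (if E = {} then None else Some (Min E));
          rt = (case kopt of None \<Rightarrow> col_height T (c + 1) + 1
                 | Some k \<Rightarrow> (THE r'. \<exists>g. T (r', c + 1) = Some g \<and> k \<in> hook_entries g));
          newcell = \<lparr>hx = a, hleg = {}, harm = {#}\<rparr>;
          g = (case T (rt, c + 1) of None \<Rightarrow> newcell | Some g \<Rightarrow> g);
          karm = (case kopt of None \<Rightarrow> {#} | Some k \<Rightarrow> {#k#})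
      in if rt \<noteq> r then
           T((r, c) \<mapsto> h',
             (rt, c + 1) \<mapsto> (case kopt of None \<Rightarrow> newcell | Some k \<Rightarrow> replace_and_append g k a))
         else
           T((r, c) \<mapsto> h'\<lparr>hleg := hleg h - moved\<rparr>,
             (rt, c + 1) \<mapsto> g\<lparr>hx := a, hleg := hleg g \<union> moved, harm := harm g + karm\<rparr>)))"

definition unc_ins :: "tab \<Rightarrow> tab" where
  "unc_ins T = (bump ^^ (LEAST d. 1 \<le> d \<and>
       (dom ((bump ^^ d) T) \<noteq> dom ((bump ^^ (d - 1)) T) \<or> (bump ^^ d) T = (bump ^^ (d - 1)) T))) T"

type_synonym qtab = "nat \<times> nat \<Rightarrow> int option"

definition unc_step :: "tab \<times> qtab \<Rightarrow> tab \<times> qtab" where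
  "unc_step PQ = (let P = fst PQ; Q = snd PQ; P' = unc_ins P; c = bump_col P;
                      cell = (THE x. x \<in> dom P' - dom P)
                  in (P', Q(cell \<mapsto> int (snd cell) - int c)))"

definition uncrowd :: "tab \<Rightarrow> tab \<times> qtab" where
  "uncrowd T = (unc_step ^^ arm_excess T) (T, Map.empty)"

definition P_of :: "tab \<Rightarrow> tab" where "P_of T = fst (uncrowd T)"
definition Q_of :: "tab \<Rightarrow> qtab" where "Q_of T = snd (uncrowd T)"

definition col_flagged_increasing :: "nat list \<Rightarrow> nat list \<Rightarrow> qtab \<Rightarrow> bool" where
  "col_flagged_increasing lam mu Q \<longleftrightarrow>
     partition lam \<and> partition mu \<and> young_cells lam \<subseteq> young_cells mu
     \<and> length lam = length mu
     \<and> dom Q = young_cells mu - young_cells lam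
     \<and> (\<forall>p v. Q p = Some v \<longrightarrow> 0 < v \<and> v \<le> int (snd p) - 1)
     \<and> (\<forall>r c c' v w. Q (r, c) = Some v \<longrightarrow> Q (r, c') = Some w \<longrightarrow> c < c' \<longrightarrow> v < w)
     \<and> (\<forall>r r' c v w. Q (r, c) = Some v \<longrightarrow> Q (r', c) = Some w \<longrightarrow> r < r' \<longrightarrow> v < w)"

end

theory Submission
  imports Defs "HOL-Library.Product_Lexorder"
begin

(* Each uncrowding insertion removes the top arm entry a, the largest arm value in the rightmost
   column c carrying an arm, and bumps it through the columns c + 1, ..., c + n until a new cell
   appears in column c + n; the recording entry placed there is n. The bumped values form a weakly
   increasing chain with one entry in each of these columns, and n exceeds the length of every
   weakly increasing chain in the columns right of c that starts from a value >= a. The top arm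
   only decreases lexicographically from one insertion to the next. So an older recording entry v
   left of or below the new cell either comes from an insertion that started right of column c,
   and then v < n by counting columns, or from one that started in column c; the chain of that
   insertion is still present, hence again v < n. Finally 0 < n <= (c + n) - 1 because c >= 1. *)

section \<open>Diagrams\<close>

definition diagram :: "(nat \<times> nat) set \<Rightarrow> bool" where
  "diagram D \<longleftrightarrow> finite D \<and> (\<forall>r c. (r, c) \<in> D \<longrightarrow> 1 \<le> r \<and> 1 \<le> c)
     \<and> (\<forall>r c r' c'. (r, c) \<in> D \<longrightarrow> 1 \<le> r' \<longrightarrow> r' \<le> r \<longrightarrow> 1 \<le> c' \<longrightarrow> c' \<le> c \<longrightarrow> (r', c') \<in> D)"

lemma diagram_finite: "diagram D \<Longrightarrow> finite D"
  by (simp add: diagram_def)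

lemma diagram_pos: "diagram D \<Longrightarrow> (r, c) \<in> D \<Longrightarrow> 1 \<le> r \<and> 1 \<le> c"
  unfolding diagram_def by blast

lemma diagram_down_closed:
  "diagram D \<Longrightarrow> (r, c) \<in> D \<Longrightarrow> 1 \<le> r' \<Longrightarrow> r' \<le> r \<Longrightarrow> 1 \<le> c' \<Longrightarrow> c' \<le> c \<Longrightarrow> (r', c') \<in> D"
  unfolding diagram_def by blast

lemma diagram_notin_northeast:
  assumes "diagram D" "(r, c) \<notin> D" "1 \<le> r" "1 \<le> c" "(r', c') \<in> D"
  shows "\<not> (r \<le> r' \<and> c \<le> c')"
  using diagram_down_closed[OF assms(1) assms(5) assms(3) _ assms(4)] assms(2) by blast

lemma diagram_insert:
  assumes D: "diagram D" and pos: "1 \<le> r" "1 \<le> c"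
    and below: "1 < r \<Longrightarrow> (r - 1, c) \<in> D" and left: "1 < c \<Longrightarrow> (r, c - 1) \<in> D"
  shows "diagram (insert (r, c) D)"
proof -
  have "(x', y') \<in> insert (r, c) D"
    if xy: "(x, y) \<in> insert (r, c) D" and le: "1 \<le> x'" "x' \<le> x" "1 \<le> y'" "y' \<le> y" for x y x' y'
  proof (cases "(x, y) \<in> D")
    case True
    then show ?thesis using diagram_down_closed[OF D] le by blast
  next
    case False
    then have "x = r" "y = c" using xy by auto
    consider "(x', y') = (r, c)" | "x' < r" | "y' < c" using le \<open>x = r\<close> \<open>y = c\<close> by fastforce
    then show ?thesis
    proof cases
      case 2
      then show ?thesis using diagram_down_closed[OF D below] le \<open>y = c\<close> by simp
    next
      case 3
      then show ?thesis using diagram_down_closed[OF D left] le \<open>x = r\<close> by simp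
    qed simp
  qed
  moreover have "1 \<le> x \<and> 1 \<le> y" if "(x, y) \<in> insert (r, c) D" for x y
    using that pos diagram_pos[OF D] by auto
  ultimately show ?thesis
    using diagram_finite[OF D] unfolding diagram_def by blast
qed

lemma down_closed_eq_atLeastAtMost:
  fixes S :: "nat set"
  assumes fin: "finite S" and pos: "\<And>x. x \<in> S \<Longrightarrow> 1 \<le> x"
    and down: "\<And>x y. x \<in> S \<Longrightarrow> 1 \<le> y \<Longrightarrow> y \<le> x \<Longrightarrow> y \<in> S"
  shows "S = {1..card S}"
proof (cases "S = {}")
  case False
  have interval: "S = {1..Max S}"
  proof
    show "S \<subseteq> {1..Max S}" using fin pos by auto
    show "{1..Max S} \<subseteq> S" using down[OF Max_in[OF fin False]] by auto
  qed
  then have "card S = Max S" by (metis card_atLeastAtMost diff_Suc_1)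
  with interval show ?thesis by simp
qed simp

lemma diagram_row_interval:
  assumes "diagram D"
  shows "{c. (r, c) \<in> D} = {1..card {c. (r, c) \<in> D}}"
proof (rule down_closed_eq_atLeastAtMost)
  show "finite {c. (r, c) \<in> D}"
    using finite_imageI[OF diagram_finite[OF assms], of snd] by (rule finite_subset[rotated]) force
  show "1 \<le> c" if "c \<in> {c. (r, c) \<in> D}" for c
    using that diagram_pos[OF assms] by simp
  show "c' \<in> {c. (r, c) \<in> D}" if "c \<in> {c. (r, c) \<in> D}" "1 \<le> c'" "c' \<le> c" for c c'
    using that diagram_down_closed[OF assms, of r c r c'] diagram_pos[OF assms, of r c] by simp
qed

lemma diagram_column_interval:
  assumes "diagram D"
  shows "{r. (r, c) \<in> D} = {1..card {r. (r, c) \<in> D}}"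
proof (rule down_closed_eq_atLeastAtMost)
  show "finite {r. (r, c) \<in> D}"
    using finite_imageI[OF diagram_finite[OF assms], of fst] by (rule finite_subset[rotated]) force
  show "1 \<le> r" if "r \<in> {r. (r, c) \<in> D}" for r
    using that diagram_pos[OF assms] by simp
  show "r' \<in> {r. (r, c) \<in> D}" if "r \<in> {r. (r, c) \<in> D}" "1 \<le> r'" "r' \<le> r" for r r'
    using that diagram_down_closed[OF assms, of r c r' c] diagram_pos[OF assms, of r c] by simp
qed

lemma partition_nth_antimono:
  assumes "partition lam" "i \<le> i'" "i' < length lam"
  shows "lam ! i' \<le> lam ! i"
  using assms sorted_wrt_nth_less[of "(\<ge>)" lam i i'] unfolding partition_def
  by (cases "i = i'") auto

lemma diagram_young_cells:
  assumes lam: "partition lam"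
  shows "diagram (young_cells lam)"
proof -
  have "young_cells lam \<subseteq> {1..length lam} \<times> {1..Max (insert 0 (set lam))}"
  proof
    fix p assume "p \<in> young_cells lam"
    then obtain r c where p: "p = (r, c)" "1 \<le> r" "r \<le> length lam" "1 \<le> c" "c \<le> lam ! (r - 1)"
      unfolding young_cells_def by blast
    have "lam ! (r - 1) \<le> Max (insert 0 (set lam))" using p(2,3) by simp
    from this show "p \<in> {1..length lam} \<times> {1..Max (insert 0 (set lam))}"
      using p order_trans[OF p(5)] by simp
  qed
  then have "finite (young_cells lam)" by (rule finite_subset) simp
  moreover have "(r', c') \<in> young_cells lam"
    if "(r, c) \<in> young_cells lam" "1 \<le> r'" "r' \<le> r" "1 \<le> c'" "c' \<le> c" for r c r' c'
    using that partition_nth_antimono[OF lam, of "r' - 1" "r - 1"] unfolding young_cells_def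
    by (auto intro: order_trans)
  ultimately show ?thesis unfolding diagram_def young_cells_def by blast
qed

lemma young_cells_first_column:
  assumes "partition lam"
  shows "{r. (r, 1) \<in> young_cells lam} = {1..length lam}"
proof -
  have "0 < lam ! (r - 1)" if "1 \<le> r" "r \<le> length lam" for r
    using that assms nth_mem[of "r - 1" lam] unfolding partition_def by auto
  then show ?thesis unfolding young_cells_def by (auto simp: Suc_le_eq)
qed

lemma diagram_eq_young_cells:
  assumes D: "diagram D" and first: "{r. (r, 1) \<in> D} = {1..m}"
  obtains mu where "partition mu" "length mu = m" "D = young_cells mu"
proof
  define len where "len r = card {c. (r, c) \<in> D}" for r
  define mu where "mu = map (\<lambda>i. len (Suc i)) [0..<m]"
  have row: "(r, c) \<in> D \<longleftrightarrow> 1 \<le> c \<and> c \<le> len r" for r c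
    using diagram_row_interval[OF D, of r] unfolding len_def by (metis atLeastAtMost_iff mem_Collect_eq)
  have in_first: "(r, 1) \<in> D \<longleftrightarrow> 1 \<le> r \<and> r \<le> m" for r
    using first by (metis atLeastAtMost_iff mem_Collect_eq)
  show "length mu = m" unfolding mu_def by simp
  have mu_nth: "mu ! (r - 1) = len r" if "1 \<le> r" "r \<le> m" for r
  proof -
    have "r - 1 < m" "Suc (r - 1) = r" using that by auto
    then show ?thesis unfolding mu_def by simp
  qed
  show "D = young_cells mu"
  proof (intro set_eqI iffI)
    fix p assume "p \<in> D"
    moreover obtain r c where p: "p = (r, c)" by (cases p)
    ultimately have "1 \<le> r" "(r, 1) \<in> D" "(r, c) \<in> D"
      using diagram_pos[OF D] diagram_down_closed[OF D, of r c r 1] by auto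
    then show "p \<in> young_cells mu"
      using in_first row mu_nth \<open>length mu = m\<close> p unfolding young_cells_def by auto
  next
    fix p assume "p \<in> young_cells mu"
    then show "p \<in> D" using row mu_nth \<open>length mu = m\<close> unfolding young_cells_def by auto
  qed
  have "len r' \<le> len r" if "1 \<le> r" "r \<le> r'" for r r'
  proof -
    have "{c. (r', c) \<in> D} \<subseteq> {c. (r, c) \<in> D}"
      using that diagram_down_closed[OF D] diagram_pos[OF D] by blast
    then show ?thesis
      unfolding len_def using diagram_row_interval[OF D, of r] by (metis card_mono finite_atLeastAtMost)
  qed
  moreover have "0 < len r" if "1 \<le> r" "r \<le> m" for r
    using that in_first[of r] row[of r 1] by simp
  ultimately show "partition mu"
    unfolding partition_def mu_def by (auto simp: sorted_wrt_iff_nth_less)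
qed

section \<open>Hook-valued tableaux of arbitrary diagram shape\<close>

definition hook_le :: "hook \<Rightarrow> hook \<Rightarrow> bool" where
  "hook_le A B \<longleftrightarrow> (\<forall>x\<in>hook_entries A. \<forall>y\<in>hook_entries B. x \<le> y)"

definition hook_less :: "hook \<Rightarrow> hook \<Rightarrow> bool" where
  "hook_less A B \<longleftrightarrow> (\<forall>x\<in>hook_entries A. \<forall>y\<in>hook_entries B. x < y)"

lemma hx_in_hook_entries [simp]: "hx h \<in> hook_entries h"
  by (simp add: hook_entries_def)

lemma hook_entries_finite: "valid_hook h \<Longrightarrow> finite (hook_entries h)"
  by (simp add: valid_hook_def hook_entries_def)

lemma hx_le_hook_entries: "valid_hook h \<Longrightarrow> x \<in> hook_entries h \<Longrightarrow> hx h \<le> x"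
  by (auto simp: valid_hook_def hook_entries_def less_imp_le)

lemma hook_leD: "hook_le A B \<Longrightarrow> x \<in> hook_entries A \<Longrightarrow> y \<in> hook_entries B \<Longrightarrow> x \<le> y"
  by (simp add: hook_le_def)

lemma hook_lessD: "hook_less A B \<Longrightarrow> x \<in> hook_entries A \<Longrightarrow> y \<in> hook_entries B \<Longrightarrow> x < y"
  by (simp add: hook_less_def)

lemma hook_le_less_trans:
  assumes "hook_le A B" "hook_less B C"
  shows "hook_less A C"
  unfolding hook_less_def
proof (intro ballI)
  fix x y assume "x \<in> hook_entries A" "y \<in> hook_entries C"
  then show "x < y"
    using hook_leD[OF assms(1), of x "hx B"] hook_lessD[OF assms(2), of "hx B" y] by simp
qed

text \<open>The tableaux met during uncrowding: \<^const>\<open>is_HVT\<close> with the shape relaxed to an arbitrary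
  diagram, and with the row and column conditions stated entrywise.\<close>

definition hook_valued :: "tab \<Rightarrow> bool" where
  "hook_valued T \<longleftrightarrow> diagram (dom T) \<and> (\<forall>p h. T p = Some h \<longrightarrow> valid_hook h)
     \<and> (\<forall>r c c' A B. T (r, c) = Some A \<longrightarrow> T (r, c') = Some B \<longrightarrow> c < c' \<longrightarrow> hook_le A B)
     \<and> (\<forall>r r' c A C. T (r, c) = Some A \<longrightarrow> T (r', c) = Some C \<longrightarrow> r < r' \<longrightarrow> hook_less A C)"

lemma hook_valued_diagram: "hook_valued T \<Longrightarrow> diagram (dom T)"
  by (simp add: hook_valued_def)

lemma hook_valued_finite: "hook_valued T \<Longrightarrow> finite (dom T)"
  by (simp add: hook_valued_def diagram_finite)

lemma hook_valued_valid: "hook_valued T \<Longrightarrow> T p = Some h \<Longrightarrow> valid_hook h"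
  unfolding hook_valued_def by blast

lemma hook_valued_row:
  "hook_valued T \<Longrightarrow> T (r, c) = Some A \<Longrightarrow> T (r, c') = Some B \<Longrightarrow> c < c' \<Longrightarrow> hook_le A B"
  unfolding hook_valued_def by blast

lemma hook_valued_col:
  "hook_valued T \<Longrightarrow> T (r, c) = Some A \<Longrightarrow> T (r', c) = Some C \<Longrightarrow> r < r' \<Longrightarrow> hook_less A C"
  unfolding hook_valued_def by blast

lemma hook_valued_southwest:
  assumes T: "hook_valued T" and B: "T (r', c') = Some B" and A: "T (r, c) = Some A"
    and le: "r' \<le> r" "c' \<le> c" "(r', c') \<noteq> (r, c)"
  shows "hook_le B A"
proof (cases "r' = r")
  case True
  then show ?thesis using hook_valued_row[OF T B[unfolded True] A] le by simp
next
  case False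
  then have "r' < r" using le by simp
  have D: "diagram (dom T)" and in_dom: "(r, c) \<in> dom T" "(r', c') \<in> dom T"
    using hook_valued_diagram[OF T] A B by auto
  have "(r', c) \<in> dom T"
    using diagram_down_closed[OF D in_dom(1), of r' c] diagram_pos[OF D in_dom(1)]
      diagram_pos[OF D in_dom(2)] le by simp
  then obtain Z where Z: "T (r', c) = Some Z" by auto
  have "hook_less Z A" using hook_valued_col[OF T Z A \<open>r' < r\<close>] .
  moreover have "hook_le B Z" if "c' < c" using hook_valued_row[OF T B Z that] .
  ultimately have "hook_less B A"
    using B Z le hook_le_less_trans by (cases "c' = c") auto
  then show ?thesis unfolding hook_le_def hook_less_def by (simp add: less_imp_le)
qed

lemma is_HVT_hook_valued:
  assumes "partition lam" and "is_HVT lam T"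
  shows "hook_valued T"
  unfolding hook_valued_def
proof (intro conjI allI impI)
  have shape: "dom T = young_cells lam"
    and valid: "\<And>p h. T p = Some h \<Longrightarrow> valid_hook h"
    and rows: "\<And>r c c' A B. T (r, c) = Some A \<Longrightarrow> T (r, c') = Some B \<Longrightarrow> c < c'
                  \<Longrightarrow> Max (hook_entries A) \<le> Min (hook_entries B)"
    and cols: "\<And>r r' c A C. T (r, c) = Some A \<Longrightarrow> T (r', c) = Some C \<Longrightarrow> r < r'
                  \<Longrightarrow> Max (hook_entries A) < Min (hook_entries C)"
    using assms(2) unfolding is_HVT_def by blast+
  show "diagram (dom T)" using shape diagram_young_cells[OF assms(1)] by simp
  show "valid_hook h" if "T p = Some h" for p h using valid[OF that] .
  show "hook_le A B" if "T (r, c) = Some A" "T (r, c') = Some B" "c < c'" for r c c' A B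
    using rows[OF that] hook_entries_finite[OF valid[OF that(1)]] hook_entries_finite[OF valid[OF that(2)]]
    unfolding hook_le_def by (meson Max_ge Min_le order_trans)
  show "hook_less A C" if "T (r, c) = Some A" "T (r', c) = Some C" "r < r'" for r r' c A C
    using cols[OF that] hook_entries_finite[OF valid[OF that(1)]] hook_entries_finite[OF valid[OF that(2)]]
    unfolding hook_less_def by (meson Max_ge Min_le le_less_trans less_le_trans)
qed

lemma hook_valued_fun_upd:
  assumes T: "hook_valued T" and D: "diagram (insert (r, c) (dom T))" and h: "valid_hook h"
    and left: "\<And>c' B. T (r, c') = Some B \<Longrightarrow> c' < c \<Longrightarrow> hook_le B h"
    and right: "\<And>c' B. T (r, c') = Some B \<Longrightarrow> c < c' \<Longrightarrow> hook_le h B"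
    and below: "\<And>r' B. T (r', c) = Some B \<Longrightarrow> r' < r \<Longrightarrow> hook_less B h"
    and above: "\<And>r' B. T (r', c) = Some B \<Longrightarrow> r < r' \<Longrightarrow> hook_less h B"
  shows "hook_valued (T((r, c) \<mapsto> h))"
  unfolding hook_valued_def
proof (intro conjI allI impI)
  show "diagram (dom (T((r, c) \<mapsto> h)))" using D by simp
  show "valid_hook g" if "(T((r, c) \<mapsto> h)) p = Some g" for p g
    using that h hook_valued_valid[OF T] by (auto split: if_splits)
  show "hook_le A B"
    if "(T((r, c) \<mapsto> h)) (x, c1) = Some A" "(T((r, c) \<mapsto> h)) (x, c2) = Some B" "c1 < c2"
    for x c1 c2 A B
    using that left right hook_valued_row[OF T] by (auto split: if_splits)
  show "hook_less A B"
    if "(T((r, c) \<mapsto> h)) (x1, y) = Some A" "(T((r, c) \<mapsto> h)) (x2, y) = Some B" "x1 < x2"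
    for x1 x2 y A B
    using that below above hook_valued_col[OF T] by (auto split: if_splits)
qed

lemma hook_valued_shrink_cell:
  assumes T: "hook_valued T" and old: "T (r, c) = Some h" and h': "valid_hook h'"
    and sub: "hook_entries h' \<subseteq> hook_entries h"
  shows "hook_valued (T((r, c) \<mapsto> h'))"
proof (rule hook_valued_fun_upd[OF T _ h'])
  show "diagram (insert (r, c) (dom T))"
    using old hook_valued_diagram[OF T] by (simp add: insert_absorb domI)
  show "hook_le B h'" if "T (r, c') = Some B" "c' < c" for c' B
    using hook_valued_row[OF T that(1) old that(2)] sub unfolding hook_le_def by blast
  show "hook_le h' B" if "T (r, c') = Some B" "c < c'" for c' B
    using hook_valued_row[OF T old that] sub unfolding hook_le_def by blast
  show "hook_less B h'" if "T (r', c) = Some B" "r' < r" for r' B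
    using hook_valued_col[OF T that(1) old that(2)] sub unfolding hook_less_def by blast
  show "hook_less h' B" if "T (r', c) = Some B" "r < r'" for r' B
    using hook_valued_col[OF T old that] sub unfolding hook_less_def by blast
qed

lemma hook_valued_col_height:
  assumes "hook_valued T"
  shows "(r, c) \<in> dom T \<longleftrightarrow> 1 \<le> r \<and> r \<le> col_height T c"
  using diagram_column_interval[OF hook_valued_diagram[OF assms], of c]
  unfolding col_height_def by (metis atLeastAtMost_iff mem_Collect_eq)

section \<open>Arm entries, column entries and chains\<close>

definition arms :: "tab \<Rightarrow> (nat \<times> nat) multiset" where
  "arms T = (\<Sum>p\<in>dom T. image_mset (Pair (snd p)) (harm (the (T p))))"

lemma arms_mem:
  assumes "finite (dom T)"
  shows "(c, x) \<in># arms T \<longleftrightarrow> (\<exists>r h. T (r, c) = Some h \<and> x \<in># harm h)"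
  unfolding arms_def set_mset_sum[OF assms] by force

lemma arm_excess_eq_size: "finite (dom T) \<Longrightarrow> arm_excess T = size (arms T)"
  by (simp add: arm_excess_def arms_def)

lemma arms_fun_upd:
  assumes fin: "finite (dom T)"
  shows "arms (T((r, c) \<mapsto> h)) + (case T (r, c) of None \<Rightarrow> {#} | Some g \<Rightarrow> image_mset (Pair c) (harm g))
       = arms T + image_mset (Pair c) (harm h)"
proof -
  let ?arm = "\<lambda>U q. image_mset (Pair (snd q)) (harm (the (U q)))"
  have rest: "(\<Sum>q\<in>dom T - {(r, c)}. ?arm (T((r, c) \<mapsto> h)) q) = (\<Sum>q\<in>dom T - {(r, c)}. ?arm T q)"
    by (intro sum.cong) auto
  have new: "arms (T((r, c) \<mapsto> h)) = image_mset (Pair c) (harm h) + (\<Sum>q\<in>dom T - {(r, c)}. ?arm T q)"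
    using fin rest unfolding arms_def by (simp add: sum.insert_remove)
  show ?thesis
  proof (cases "T (r, c)")
    case None
    then have "dom T - {(r, c)} = dom T" by auto
    with None new show ?thesis by (simp add: arms_def)
  next
    case (Some g)
    then have "(r, c) \<in> dom T" by auto
    with Some have "arms T = image_mset (Pair c) (harm g) + (\<Sum>q\<in>dom T - {(r, c)}. ?arm T q)"
      unfolding arms_def using sum.remove[OF fin \<open>(r, c) \<in> dom T\<close>, of "?arm T"] by simp
    with Some new show ?thesis by (simp add: ac_simps)
  qed
qed

text \<open>The order on pairs is lexicographic (theory Product_Lexorder), so the top arm entry is the
  largest arm value in the rightmost column that has an arm: the entry removed by the next bump.\<close>

definition top_arm :: "tab \<Rightarrow> nat \<times> nat" where
  "top_arm T = Max (set_mset (arms T))"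

lemma top_arm_mem: "arms T \<noteq> {#} \<Longrightarrow> top_arm T \<in># arms T"
  unfolding top_arm_def by (simp add: Max_in)

lemma le_top_arm: "p \<in># arms T \<Longrightarrow> p \<le> top_arm T"
  unfolding top_arm_def by simp

lemma col_entries_iff: "x \<in> col_entries T c \<longleftrightarrow> (\<exists>r h. T (r, c) = Some h \<and> x \<in> hook_entries h)"
  unfolding col_entries_def by blast

lemma col_entries_finite:
  assumes "hook_valued T"
  shows "finite (col_entries T c)"
proof -
  have "col_entries T c = (\<Union>p\<in>dom T \<inter> {p. snd p = c}. hook_entries (the (T p)))"
    unfolding col_entries_def by force
  then show ?thesis
    using hook_valued_finite[OF assms] hook_entries_finite hook_valued_valid[OF assms] by auto
qed

definition col_hook_legs :: "tab \<Rightarrow> nat \<Rightarrow> nat set" where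
  "col_hook_legs T c = {x. \<exists>r h. T (r, c) = Some h \<and> (x = hx h \<or> x \<in> hleg h)}"

lemma col_hook_legs_subset: "col_hook_legs T c \<subseteq> col_entries T c"
  unfolding col_hook_legs_def col_entries_def hook_entries_def by blast

lemma col_entries_cong: "(\<And>r. U (r, c) = T (r, c)) \<Longrightarrow> col_entries U c = col_entries T c"
  unfolding col_entries_def by simp

lemma col_hook_legs_cong: "(\<And>r. U (r, c) = T (r, c)) \<Longrightarrow> col_hook_legs U c = col_hook_legs T c"
  unfolding col_hook_legs_def by simp

fun weak_chain :: "(nat \<Rightarrow> nat set) \<Rightarrow> nat \<Rightarrow> nat \<Rightarrow> nat \<Rightarrow> bool" where
  "weak_chain C j a 0 \<longleftrightarrow> True"
| "weak_chain C j a (Suc n) \<longleftrightarrow> (\<exists>x\<in>C (Suc j). a \<le> x \<and> weak_chain C (Suc j) x n)"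

lemma weak_chain_mono:
  assumes "weak_chain C j a n" "m \<le> n" "a' \<le> a" "\<And>i. j < i \<Longrightarrow> C i \<subseteq> C' i"
  shows "weak_chain C' j a' m"
  using assms
proof (induction n arbitrary: j a a' m)
  case (Suc n)
  then show ?case
  proof (cases m)
    case (Suc m')
    from Suc.prems obtain x where x: "x \<in> C (Suc j)" "a \<le> x" "weak_chain C (Suc j) x n" by auto
    have "x \<in> C' (Suc j)" using x(1) Suc.prems(4)[of "Suc j"] by auto
    moreover have "a' \<le> x" using x(2) Suc.prems(3) by simp
    moreover have "weak_chain C' (Suc j) x m'"
      using Suc.IH[OF x(3)] Suc.prems \<open>m = Suc m'\<close> by auto
    ultimately show ?thesis using \<open>m = Suc m'\<close> by auto
  qed simp
qed simp

section \<open>A single bump\<close>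

lemma cells_with_arm_iff: "p \<in> cells_with_arm T \<longleftrightarrow> (\<exists>h. T p = Some h \<and> harm h \<noteq> {#})"
  unfolding cells_with_arm_def by auto

lemma maxarm_mem: "harm h \<noteq> {#} \<Longrightarrow> maxarm h \<in># harm h"
  unfolding maxarm_def by (simp add: Max_in)

locale arm_bump =
  fixes T :: tab and j a :: nat
  assumes hook_valued: "hook_valued T"
    and top_mem: "(j, a) \<in># arms T"
    and top_max: "\<And>p. p \<in># arms T \<Longrightarrow> p \<le> (j, a)"
begin

lemma finite_dom: "finite (dom T)"
  using hook_valued_finite[OF hook_valued] .

lemma arm_le_top: "T (r, c) = Some h \<Longrightarrow> x \<in># harm h \<Longrightarrow> c < j \<or> c = j \<and> x \<le> a"
  using top_max[of "(c, x)"] arms_mem[OF finite_dom] by fastforce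

lemma no_arms_right: "T (r, c) = Some h \<Longrightarrow> j < c \<Longrightarrow> harm h = {#}"
  using arm_le_top by fastforce

lemma bump_col_eq: "bump_col T = j"
proof -
  obtain r h where "T (r, j) = Some h" "a \<in># harm h"
    using top_mem arms_mem[OF finite_dom] by blast
  then have "j \<in> snd ` cells_with_arm T" by (force simp: cells_with_arm_iff)
  moreover have "c \<le> j" if c: "c \<in> snd ` cells_with_arm T" for c
  proof -
    obtain r h where "T (r, c) = Some h" "harm h \<noteq> {#}"
      using c by (force simp: cells_with_arm_iff)
    then show ?thesis using arm_le_top maxarm_mem by fastforce
  qed
  moreover have "finite (cells_with_arm T)"
    using finite_dom unfolding cells_with_arm_def by simp
  ultimately show ?thesis unfolding bump_col_def by (intro Max_eqI) auto
qed

lemma maxarm_le: "T (r, j) = Some h \<Longrightarrow> harm h \<noteq> {#} \<Longrightarrow> maxarm h \<le> a"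
  using arm_le_top maxarm_mem by fastforce

lemma maxarm_eq:
  assumes "T (r, j) = Some h" "a \<in># harm h"
  shows "maxarm h = a"
proof (rule antisym)
  show "maxarm h \<le> a" using maxarm_le[OF assms(1)] assms(2) by force
  show "a \<le> maxarm h" using assms(2) unfolding maxarm_def by simp
qed

definition row :: nat where
  "row = bump_row T"

definition cell :: hook where
  "cell = the (T (row, j))"

lemma
  shows cell_at_row: "T (row, j) = Some cell" and a_in_arm_cell: "a \<in># harm cell"
    and maxarm_cell: "maxarm cell = a"
proof -
  define S where "S = {r. (r, j) \<in> cells_with_arm T}"
  have "S \<subseteq> fst ` dom T" unfolding S_def cells_with_arm_def by force
  then have finS: "finite S" using finite_dom finite_subset by blast
  obtain r0 h0 where h0: "T (r0, j) = Some h0" "a \<in># harm h0"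
    using top_mem arms_mem[OF finite_dom] by blast
  have r0: "r0 \<in> S" "maxarm (the (T (r0, j))) = a"
    using h0 maxarm_eq unfolding S_def cells_with_arm_iff by auto
  have "Max ((\<lambda>r. maxarm (the (T (r, j)))) ` S) = a"
  proof (rule Max_eqI)
    show "finite ((\<lambda>r. maxarm (the (T (r, j)))) ` S)" using finS by simp
    show "a \<in> (\<lambda>r. maxarm (the (T (r, j)))) ` S" using r0 by force
    show "y \<le> a" if "y \<in> (\<lambda>r. maxarm (the (T (r, j)))) ` S" for y
      using that maxarm_le unfolding S_def cells_with_arm_iff by force
  qed
  then have "row = Max {r \<in> S. maxarm (the (T (r, j))) = a}"
    unfolding row_def bump_row_def Let_def bump_col_eq S_def by simp
  also have "\<dots> \<in> {r \<in> S. maxarm (the (T (r, j))) = a}"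
    using finS r0 by (intro Max_in) auto
  finally obtain h where h: "T (row, j) = Some h" "harm h \<noteq> {#}" "maxarm h = a"
    unfolding S_def cells_with_arm_iff by auto
  then show "T (row, j) = Some cell" "maxarm cell = a" unfolding cell_def by simp_all
  show "a \<in># harm cell" using h maxarm_mem unfolding cell_def by fastforce
qed

lemma valid_cell: "valid_hook cell"
  using hook_valued_valid[OF hook_valued cell_at_row] .

lemma hx_cell_le: "hx cell \<le> a"
  using valid_cell a_in_arm_cell unfolding valid_hook_def by blast

lemma a_pos: "0 < a"
  using valid_cell hx_cell_le unfolding valid_hook_def by simp

lemma row_pos: "1 \<le> row" and col_pos: "1 \<le> j"
  using diagram_pos[OF hook_valued_diagram[OF hook_valued], of row j] cell_at_row by auto

lemma a_in_cell: "a \<in> hook_entries cell"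
  using a_in_arm_cell by (simp add: hook_entries_def)

lemma arm_cell_le: "x \<in># harm cell \<Longrightarrow> x \<le> a"
  using arm_le_top[OF cell_at_row] by simp

lemma a_le_right_of_cell: "T (row, c) = Some g \<Longrightarrow> j < c \<Longrightarrow> x \<in> hook_entries g \<Longrightarrow> a \<le> x"
  using hook_leD[OF hook_valued_row[OF hook_valued cell_at_row] a_in_cell] by blast

text \<open>These constants mirror the let-bindings in the definition of \<^const>\<open>bump\<close>: the minimum of
  \<open>candidates\<close> is the entry \<open>k\<close> of the bumping rule and \<open>target\<close> is its row \<open>r~\<close>.\<close>

definition candidates :: "nat set" where
  "candidates = {x \<in> col_entries T (j + 1). a \<le> x}"

definition moved :: "nat set" where
  "moved = {x \<in> hleg cell. a < x \<and> x \<le> Max (hleg cell)}"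

definition kopt :: "nat option" where
  "kopt = (if candidates = {} then None else Some (Min candidates))"

definition target :: nat where
  "target = (case kopt of None \<Rightarrow> col_height T (j + 1) + 1
     | Some k \<Rightarrow> (THE r'. \<exists>g. T (r', j + 1) = Some g \<and> k \<in> hook_entries g))"

definition newcell :: hook where
  "newcell = \<lparr>hx = a, hleg = {}, harm = {#}\<rparr>"

definition old :: hook where
  "old = (case T (target, j + 1) of None \<Rightarrow> newcell | Some g \<Rightarrow> g)"

definition karm :: "nat multiset" where
  "karm = (case kopt of None \<Rightarrow> {#} | Some k \<Rightarrow> {#k#})"

definition left_hook :: hook where
  "left_hook = (if target = row then cell\<lparr>harm := harm cell - {#a#}, hleg := hleg cell - moved\<rparr>
     else cell\<lparr>harm := harm cell - {#a#}\<rparr>)"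

definition right_hook :: hook where
  "right_hook = (if target = row then old\<lparr>hx := a, hleg := hleg old \<union> moved, harm := harm old + karm\<rparr>
     else case kopt of None \<Rightarrow> newcell | Some k \<Rightarrow> replace_and_append old k a)"

lemma bump_eq: "bump T = T((row, j) \<mapsto> left_hook, (target, Suc j) \<mapsto> right_hook)"
proof -
  have "arm_excess T \<noteq> 0" using top_mem arm_excess_eq_size[OF finite_dom] by auto
  then show ?thesis
    unfolding bump_def Let_def bump_col_eq row_def[symmetric] cell_def[symmetric] maxarm_cell
      candidates_def[symmetric] moved_def[symmetric] kopt_def[symmetric] target_def[symmetric]
      newcell_def[symmetric] old_def[symmetric] karm_def[symmetric] left_hook_def right_hook_def
    by auto
qed

lemma candidates_finite: "finite candidates"
  using col_entries_finite[OF hook_valued] unfolding candidates_def by simp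

lemma candidatesI: "T (r, Suc j) = Some g \<Longrightarrow> x \<in> hook_entries g \<Longrightarrow> a \<le> x \<Longrightarrow> x \<in> candidates"
  unfolding candidates_def col_entries_iff by auto

lemma candidatesD: "x \<in> candidates \<Longrightarrow> a \<le> x \<and> (\<exists>r g. T (r, Suc j) = Some g \<and> x \<in> hook_entries g)"
  unfolding candidates_def col_entries_iff by auto

lemma Min_candidates_le: "x \<in> candidates \<Longrightarrow> Min candidates \<le> x"
  using candidates_finite by simp

lemma target_fresh:
  assumes "candidates = {}"
  shows "target = col_height T (Suc j) + 1" "T (target, Suc j) = None"
proof -
  show "target = col_height T (Suc j) + 1" unfolding target_def kopt_def using assms by simp
  then show "T (target, Suc j) = None"
    using hook_valued_col_height[OF hook_valued, of target "Suc j"] by auto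
qed

lemma target_occupied:
  assumes "candidates \<noteq> {}"
  shows "T (target, Suc j) = Some old" "Min candidates \<in> hook_entries old"
proof -
  obtain r0 g0 where g0: "T (r0, Suc j) = Some g0" "Min candidates \<in> hook_entries g0"
    using candidatesD[OF Min_in[OF candidates_finite assms]] by blast
  have unique: "r' = r0" if "T (r', Suc j) = Some g" "Min candidates \<in> hook_entries g" for r' g
  proof (rule ccontr)
    assume "r' \<noteq> r0"
    then consider "r' < r0" | "r0 < r'" by linarith
    then show False
      using hook_lessD[OF hook_valued_col[OF hook_valued that(1) g0(1)] that(2) g0(2)]
        hook_lessD[OF hook_valued_col[OF hook_valued g0(1) that(1)] g0(2) that(2)] by cases auto
  qed
  have "target = (THE r'. \<exists>g. T (r', Suc j) = Some g \<and> Min candidates \<in> hook_entries g)"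
    unfolding target_def kopt_def using assms by simp
  also have "\<dots> = r0"
    using g0 unique by (intro the_equality) blast+
  finally have "target = r0" .
  then show "T (target, Suc j) = Some old" "Min candidates \<in> hook_entries old"
    using g0 unfolding old_def by simp_all
qed

lemma target_le_row: "target \<le> row"
proof (cases "candidates = {}")
  case True
  have "(row, Suc j) \<notin> dom T"
  proof
    assume "(row, Suc j) \<in> dom T"
    then obtain g where "T (row, Suc j) = Some g" by auto
    then have "hx g \<in> candidates" using candidatesI a_le_right_of_cell by simp
    then show False using True by simp
  qed
  then show ?thesis
    using target_fresh(1)[OF True] row_pos hook_valued_col_height[OF hook_valued, of row "Suc j"] by simp
next
  case False
  show ?thesis
  proof (rule ccontr)
    assume "\<not> target \<le> row"
    then have "(row, Suc j) \<in> dom T"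
      using diagram_down_closed[OF hook_valued_diagram[OF hook_valued], of target "Suc j" row "Suc j"]
        target_occupied(1)[OF False] row_pos by auto
    then obtain g where g: "T (row, Suc j) = Some g" by auto
    then have "Min candidates \<le> hx g" using Min_candidates_le candidatesI a_le_right_of_cell by simp
    moreover have "hx g < Min candidates"
      using hook_lessD[OF hook_valued_col[OF hook_valued g target_occupied(1)[OF False]]]
        target_occupied(2)[OF False] \<open>\<not> target \<le> row\<close> by simp
    ultimately show False by simp
  qed
qed

lemma target_pos: "1 \<le> target"
  using target_fresh(1) diagram_pos[OF hook_valued_diagram[OF hook_valued]] target_occupied(1)
  by (cases "candidates = {}") fastforce+

lemma below_target_less:
  assumes "T (r', Suc j) = Some B" "r' < target" "y \<in> hook_entries B"
  shows "y < a"
proof (rule ccontr)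
  assume "\<not> y < a"
  then have y: "y \<in> candidates" using candidatesI assms by simp
  then have "candidates \<noteq> {}" by auto
  have "y < Min candidates"
    using hook_lessD[OF hook_valued_col[OF hook_valued assms(1) target_occupied(1)[OF \<open>candidates \<noteq> {}\<close>]]]
      assms target_occupied(2)[OF \<open>candidates \<noteq> {}\<close>] by simp
  then show False using Min_candidates_le[OF y] by simp
qed

lemma target_empty_no_northeast:
  assumes "T (target, Suc j) = None" "T (r', c') = Some B" "target \<le> r'" "Suc j \<le> c'"
  shows False
  using diagram_notin_northeast[OF hook_valued_diagram[OF hook_valued], of target "Suc j" r' c']
    assms target_pos by auto

lemma moved_eq: "moved = {x \<in> hleg cell. a < x}"
  using valid_cell unfolding moved_def valid_hook_def by auto

lemma
  shows valid_left_hook: "valid_hook left_hook"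
    and left_hook_entries: "hook_entries left_hook \<subseteq> hook_entries cell"
    and harm_cell_eq: "harm cell = harm left_hook + {#a#}"
    and hx_left_hook: "hx left_hook = hx cell"
    and small_leg_kept: "x \<in> hleg cell \<Longrightarrow> x \<le> a \<Longrightarrow> x \<in> hleg left_hook"
    and left_hook_le_a: "target = row \<Longrightarrow> x \<in> hook_entries left_hook \<Longrightarrow> x \<le> a"
  using valid_cell a_in_arm_cell arm_cell_le hx_cell_le
  unfolding left_hook_def moved_eq valid_hook_def hook_entries_def
  by (auto dest: in_diffD)

lemma harm_old: "harm old = {#}"
  using no_arms_right[of target "Suc j" old] unfolding old_def newcell_def
  by (cases "T (target, Suc j)") auto

lemma
  assumes "candidates \<noteq> {}"
  shows kopt_Some: "kopt = Some (Min candidates)" and karm_Some: "karm = {#Min candidates#}"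
    and a_le_Min_candidates: "a \<le> Min candidates" and valid_old: "valid_hook old"
  using assms candidatesD[OF Min_in[OF candidates_finite assms]]
    hook_valued_valid[OF hook_valued target_occupied(1)[OF assms]]
  unfolding kopt_def karm_def by simp_all

lemma hx_old_if_same_row:
  assumes "candidates \<noteq> {}" "target = row"
  shows "hx old = Min candidates"
proof (rule antisym)
  have "a \<le> hx old" using a_le_right_of_cell target_occupied(1)[OF assms(1)] assms(2) by simp
  then show "Min candidates \<le> hx old"
    using Min_candidates_le candidatesI[OF target_occupied(1)[OF assms(1)]] by simp
  show "hx old \<le> Min candidates"
    using hx_le_hook_entries[OF valid_old[OF assms(1)] target_occupied(2)[OF assms(1)]] .
qed

lemma bumped_leg:
  assumes "candidates \<noteq> {}" "hx old \<noteq> Min candidates"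
  shows "Min candidates \<in> hleg old" and "hx old < a"
proof -
  show "Min candidates \<in> hleg old"
    using target_occupied(2)[OF assms(1)] assms(2) harm_old unfolding hook_entries_def by simp
  then have "hx old < Min candidates" using valid_old[OF assms(1)] unfolding valid_hook_def by blast
  then show "hx old < a"
    using Min_candidates_le candidatesI[OF target_occupied(1)[OF assms(1)] hx_in_hook_entries]
    by (meson not_le)
qed

lemma
  shows valid_right_hook: "valid_hook right_hook"
    and a_in_right_hook: "a = hx right_hook \<or> a \<in> hleg right_hook"
    and harm_right_hook: "harm right_hook = karm"
    and right_hook_entries:
      "hook_entries right_hook \<subseteq> insert a (hook_entries old \<union> (if target = row then moved else {}))"
proof -
  let ?k = "Min candidates"
  have legs: "finite (hleg cell)" using valid_cell unfolding valid_hook_def by blast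
  (* A new cell on top of column j + 1, case (b) of the bumping rule, and case (a) with the
     bumped entry in hook or in leg position. *)
  consider (fresh) "candidates = {}" | (row) "candidates \<noteq> {}" "target = row"
    | (hook) "candidates \<noteq> {}" "target \<noteq> row" "hx old = ?k"
    | (leg) "candidates \<noteq> {}" "target \<noteq> row" "hx old \<noteq> ?k"
    by blast
  then have "valid_hook right_hook \<and> (a = hx right_hook \<or> a \<in> hleg right_hook) \<and> harm right_hook = karm
    \<and> hook_entries right_hook \<subseteq> insert a (hook_entries old \<union> (if target = row then moved else {}))"
  proof cases
    case fresh
    then have "old = newcell" "kopt = None" "karm = {#}"
      using target_fresh(2) unfolding old_def kopt_def karm_def by simp_all
    then show ?thesis
      using a_pos finite_subset[OF _ legs]
      unfolding right_hook_def newcell_def moved_eq valid_hook_def hook_entries_def by auto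
  next
    case row
    then show ?thesis
      using hx_old_if_same_row[OF row] a_le_Min_candidates karm_Some a_pos valid_old harm_old
        finite_subset[OF _ legs]
      unfolding right_hook_def moved_eq valid_hook_def hook_entries_def by fastforce
  next
    case hook
    then show ?thesis
      using a_le_Min_candidates karm_Some kopt_Some a_pos valid_old harm_old
      unfolding right_hook_def replace_and_append_def valid_hook_def hook_entries_def by auto
  next
    case leg
    then show ?thesis
      using bumped_leg[OF leg(1,3)] karm_Some kopt_Some valid_old harm_old
      unfolding right_hook_def replace_and_append_def valid_hook_def hook_entries_def by auto
  qed
  then show "valid_hook right_hook" and "a = hx right_hook \<or> a \<in> hleg right_hook"
    and "harm right_hook = karm"
    and "hook_entries right_hook \<subseteq> insert a (hook_entries old \<union> (if target = row then moved else {}))"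
    by blast+
qed

lemma right_hook_ge:
  assumes "x \<in> hook_entries right_hook"
  shows "a \<le> x \<or> (\<exists>g. T (target, Suc j) = Some g \<and> x \<in> hook_entries g)"
  using right_hook_entries assms unfolding old_def newcell_def moved_eq hook_entries_def
  by (cases "T (target, Suc j)") (auto split: if_splits)

lemma right_hook_bounded_by_old:
  assumes old: "T (target, Suc j) = Some g" and x: "x \<in> hook_entries right_hook"
  shows "\<exists>y\<in>hook_entries g. x \<le> y"
proof -
  have "candidates \<noteq> {}" using old target_fresh(2) by auto
  then have k: "Min candidates \<in> hook_entries g" "a \<le> Min candidates"
    using target_occupied old a_le_Min_candidates by auto
  have "x \<le> hx g" if "target = row" "x \<in> moved"
    using hook_leD[OF hook_valued_row[OF hook_valued cell_at_row old[unfolded \<open>target = row\<close>]]]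
      that(2) unfolding moved_eq hook_entries_def by simp
  then show ?thesis
    using right_hook_entries x k old unfolding old_def by (auto split: if_splits intro: hx_in_hook_entries)
qed

lemma right_hook_le: "T (target, Suc j) = Some g \<Longrightarrow> hook_le g B \<Longrightarrow> hook_le right_hook B"
  unfolding hook_le_def by (meson right_hook_bounded_by_old order_trans)

lemma right_hook_less: "T (target, Suc j) = Some g \<Longrightarrow> hook_less g B \<Longrightarrow> hook_less right_hook B"
  unfolding hook_less_def by (meson right_hook_bounded_by_old le_less_trans)

definition after_removal :: tab where
  "after_removal = T((row, j) \<mapsto> left_hook)"

lemma hook_valued_after_removal: "hook_valued after_removal"
  unfolding after_removal_def
  using hook_valued_shrink_cell[OF hook_valued cell_at_row valid_left_hook left_hook_entries] .

lemma after_removal_other: "p \<noteq> (row, j) \<Longrightarrow> after_removal p = T p"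
  unfolding after_removal_def by simp

lemma dom_after_removal: "dom after_removal = dom T"
  unfolding after_removal_def using cell_at_row by auto

lemma bump_eq_after_removal: "bump T = after_removal((target, Suc j) \<mapsto> right_hook)"
  unfolding after_removal_def using bump_eq by simp

lemma diagram_insert_target: "diagram (insert (target, Suc j) (dom T))"
proof (cases "candidates = {}")
  case True
  have D: "diagram (dom T)" using hook_valued_diagram[OF hook_valued] .
  show ?thesis
  proof (rule diagram_insert[OF D target_pos])
    show "(target - 1, Suc j) \<in> dom T" if "1 < target"
      using that target_fresh(1)[OF True] hook_valued_col_height[OF hook_valued, of "target - 1" "Suc j"]
      by simp
    show "(target, Suc j - 1) \<in> dom T"
      using diagram_down_closed[OF D _ target_pos target_le_row, of j j] cell_at_row col_pos by auto
  qed simp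
next
  case False
  then show ?thesis
    using target_occupied(1) hook_valued_diagram[OF hook_valued] by (simp add: insert_absorb domI)
qed

lemma left_of_target_le:
  assumes B: "after_removal (target, c') = Some B" and c': "c' < Suc j"
  shows "hook_le B right_hook"
proof -
  have small: "x \<le> a" if x: "x \<in> hook_entries B" for x
  proof (cases "(target, c') = (row, j)")
    case True
    then show ?thesis using B x left_hook_le_a unfolding after_removal_def by auto
  next
    case False
    then have "hook_le B cell"
      using B c' target_le_row hook_valued_southwest[OF hook_valued _ cell_at_row] after_removal_other
      by auto
    then show ?thesis using hook_leD[OF _ x hx_in_hook_entries] hx_cell_le by fastforce
  qed
  have below_old: "x \<le> y"
    if x: "x \<in> hook_entries B" and g: "T (target, Suc j) = Some g" "y \<in> hook_entries g" for x y g
  proof (cases "(target, c') = (row, j)")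
    case True
    then show ?thesis
      using B x left_hook_entries hook_leD[OF hook_valued_row[OF hook_valued cell_at_row]] g
      unfolding after_removal_def by auto
  next
    case False
    then show ?thesis
      using B x c' hook_leD[OF hook_valued_row[OF hook_valued _ g(1)]] g(2) after_removal_other by auto
  qed
  show ?thesis
    unfolding hook_le_def using right_hook_ge small below_old by (meson order_trans)
qed

lemma right_of_target_ge:
  assumes B: "after_removal (target, c') = Some B" and c': "Suc j < c'"
  shows "hook_le right_hook B"
proof -
  have B': "T (target, c') = Some B" using B c' after_removal_other by auto
  show ?thesis
  proof (cases "T (target, Suc j)")
    case None
    with target_empty_no_northeast[OF None B'] c' show ?thesis by simp
  next
    case (Some g)
    then show ?thesis using B' c' right_hook_le hook_valued_row[OF hook_valued Some] by auto
  qed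
qed

lemma below_target_less_right_hook:
  assumes B: "after_removal (r', Suc j) = Some B" and r': "r' < target"
  shows "hook_less B right_hook"
proof -
  have B': "T (r', Suc j) = Some B" using B after_removal_other by simp
  have "x < y" if "x \<in> hook_entries B" "y \<in> hook_entries right_hook" for x y
    using right_hook_ge[OF that(2)] below_target_less[OF B' r' that(1)]
      hook_lessD[OF hook_valued_col[OF hook_valued B' _ r'] that(1)] by auto
  then show ?thesis unfolding hook_less_def by blast
qed

lemma above_target_greater:
  assumes B: "after_removal (r', Suc j) = Some B" and r': "target < r'"
  shows "hook_less right_hook B"
proof -
  have B': "T (r', Suc j) = Some B" using B after_removal_other by simp
  show ?thesis
  proof (cases "T (target, Suc j)")
    case None
    with target_empty_no_northeast[OF None B'] r' show ?thesis by simp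
  next
    case (Some g)
    then show ?thesis using B' r' right_hook_less hook_valued_col[OF hook_valued Some] by auto
  qed
qed

lemma hook_valued_bump: "hook_valued (bump T)"
  unfolding bump_eq_after_removal
  using hook_valued_fun_upd[OF hook_valued_after_removal _ valid_right_hook
      left_of_target_le right_of_target_ge below_target_less_right_hook above_target_greater]
    diagram_insert_target dom_after_removal by simp

lemma arms_bump:
  "arms (bump T) + {#(j, a)#} = arms T + (if candidates = {} then {#} else {#(Suc j, Min candidates)#})"
proof -
  have "arms after_removal + image_mset (Pair j) (harm cell) = arms T + image_mset (Pair j) (harm left_hook)"
    using arms_fun_upd[OF finite_dom, of row j left_hook] cell_at_row unfolding after_removal_def by simp
  then have removal: "arms after_removal + {#(j, a)#} = arms T" using harm_cell_eq by (simp add: ac_simps)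
  have "arms (after_removal((target, Suc j) \<mapsto> right_hook))
      + (case after_removal (target, Suc j) of None \<Rightarrow> {#} | Some g \<Rightarrow> image_mset (Pair (Suc j)) (harm g))
      = arms after_removal + image_mset (Pair (Suc j)) (harm right_hook)"
    using arms_fun_upd[of after_removal target "Suc j" right_hook] finite_dom dom_after_removal by simp
  moreover have "(case after_removal (target, Suc j) of None \<Rightarrow> {#}
      | Some g \<Rightarrow> image_mset (Pair (Suc j)) (harm g)) = {#}"
    using harm_old after_removal_other unfolding old_def by (cases "T (target, Suc j)") auto
  ultimately have "arms (bump T) = arms after_removal + image_mset (Pair (Suc j)) karm"
    using bump_eq_after_removal harm_right_hook by simp
  with removal show ?thesis unfolding karm_def kopt_def by (simp add: ac_simps)
qed

lemma dom_bump: "dom (bump T) = insert (target, Suc j) (dom T)"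
  using bump_eq cell_at_row by auto

lemma target_in_dom_iff: "(target, Suc j) \<in> dom T \<longleftrightarrow> candidates \<noteq> {}"
  using target_fresh(2) target_occupied(1) by auto

lemma bump_other_columns: "snd p \<noteq> j \<Longrightarrow> snd p \<noteq> Suc j \<Longrightarrow> bump T p = T p"
  using bump_eq by auto

lemma a_in_col_hook_legs_bump: "a \<in> col_hook_legs (bump T) (Suc j)"
  using bump_eq a_in_right_hook unfolding col_hook_legs_def by auto

lemma col_hook_legs_bump:
  assumes "x \<in> col_hook_legs T j" "x \<le> a"
  shows "x \<in> col_hook_legs (bump T) j"
proof -
  obtain r h where h: "T (r, j) = Some h" "x = hx h \<or> x \<in> hleg h"
    using assms(1) unfolding col_hook_legs_def by blast
  show ?thesis
  proof (cases "r = row")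
    case True
    then have "x = hx left_hook \<or> x \<in> hleg left_hook"
      using h cell_at_row hx_left_hook small_leg_kept assms(2) by auto
    then show ?thesis using bump_eq True unfolding col_hook_legs_def by force
  next
    case False
    then show ?thesis using bump_eq h unfolding col_hook_legs_def by force
  qed
qed

end

section \<open>Uncrowding insertion\<close>

definition first_new_cell :: "tab \<Rightarrow> nat \<Rightarrow> nat \<times> nat \<Rightarrow> bool" where
  "first_new_cell T n e \<longleftrightarrow> 1 \<le> n \<and> e \<notin> dom T \<and> dom ((bump ^^ n) T) = insert e (dom T)
     \<and> (\<forall>d. 1 \<le> d \<longrightarrow> d < n \<longrightarrow> dom ((bump ^^ d) T) = dom T \<and> (bump ^^ d) T \<noteq> (bump ^^ (d - 1)) T)"

lemma first_new_cell_1: "dom (bump T) = insert e (dom T) \<Longrightarrow> e \<notin> dom T \<Longrightarrow> first_new_cell T 1 e"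
  unfolding first_new_cell_def by simp

lemma first_new_cell_Suc:
  assumes "first_new_cell (bump T) n e" "dom (bump T) = dom T" "bump T \<noteq> T"
  shows "first_new_cell T (Suc n) e"
proof -
  have shift: "(bump ^^ Suc d) T = (bump ^^ d) (bump T)" for d
    by (simp only: funpow_Suc_right comp_def)
  have "dom ((bump ^^ d) T) = dom T \<and> (bump ^^ d) T \<noteq> (bump ^^ (d - 1)) T"
    if d: "1 \<le> d" "d < Suc n" for d
  proof (cases "d = 1")
    case False
    then obtain d' where d': "d = Suc d'" "1 \<le> d'" "d' < n" using d by (cases d) auto
    then have "(bump ^^ (d - 1)) T = (bump ^^ (d' - 1)) (bump T)"
      using shift[of "d' - 1"] by simp
    then show ?thesis using assms d' shift[of d'] unfolding first_new_cell_def by auto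
  qed (use assms in simp)
  then show ?thesis using assms shift[of n] unfolding first_new_cell_def by auto
qed

lemma unc_ins_eq:
  assumes "first_new_cell T n e"
  shows "unc_ins T = (bump ^^ n) T"
proof -
  have n: "1 \<le> n" and e: "e \<notin> dom T" "dom ((bump ^^ n) T) = insert e (dom T)"
    and before: "\<And>d. 1 \<le> d \<Longrightarrow> d < n \<Longrightarrow> dom ((bump ^^ d) T) = dom T \<and> (bump ^^ d) T \<noteq> (bump ^^ (d - 1)) T"
    using assms unfolding first_new_cell_def by blast+
  have dom_before: "dom ((bump ^^ (d - 1)) T) = dom T" if "d \<le> n" for d
    using before[of "d - 1"] that n by (cases "d \<le> 1") auto
  have "(LEAST d. 1 \<le> d \<and> (dom ((bump ^^ d) T) \<noteq> dom ((bump ^^ (d - 1)) T)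
          \<or> (bump ^^ d) T = (bump ^^ (d - 1)) T)) = n"
  proof (rule Least_equality)
    show "1 \<le> n \<and> (dom ((bump ^^ n) T) \<noteq> dom ((bump ^^ (n - 1)) T) \<or> (bump ^^ n) T = (bump ^^ (n - 1)) T)"
      using n e dom_before[of n] by auto
    show "n \<le> d" if "1 \<le> d \<and> (dom ((bump ^^ d) T) \<noteq> dom ((bump ^^ (d - 1)) T)
          \<or> (bump ^^ d) T = (bump ^^ (d - 1)) T)" for d
      using that before[of d] dom_before[of d] by (cases "d < n") auto
  qed
  then show ?thesis unfolding unc_ins_def by simp
qed

text \<open>Chains are recorded in hook and leg positions because a bump out of column \<open>j\<close> keeps every
  hook and leg entry of column \<open>j\<close> not exceeding the bumped value, whereas arm entries may move.\<close>

definition insertion :: "tab \<Rightarrow> nat \<Rightarrow> nat \<Rightarrow> nat \<Rightarrow> nat \<times> nat \<Rightarrow> bool" where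
  "insertion T j a n e \<longleftrightarrow> first_new_cell T n e \<and> snd e = j + n
     \<and> hook_valued ((bump ^^ n) T) \<and> arms ((bump ^^ n) T) + {#(j, a)#} = arms T
     \<and> weak_chain (col_hook_legs ((bump ^^ n) T)) j a n
     \<and> (\<forall>x\<in>col_hook_legs T j. x \<le> a \<longrightarrow> x \<in> col_hook_legs ((bump ^^ n) T) j)
     \<and> (\<forall>p. snd p < j \<longrightarrow> (bump ^^ n) T p = T p)
     \<and> (\<forall>L. weak_chain (col_entries T) j a L \<longrightarrow> L < n)"

context arm_bump
begin

lemma insertion_fresh:
  assumes "candidates = {}"
  shows "insertion T j a 1 (target, Suc j)"
proof -
  have "first_new_cell T 1 (target, Suc j)"
    using first_new_cell_1 dom_bump target_in_dom_iff assms by simp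
  moreover have "weak_chain (col_hook_legs (bump T)) j a 1"
    using a_in_col_hook_legs_bump by auto
  moreover have "L < 1" if "weak_chain (col_entries T) j a L" for L
    using that assms candidatesI col_entries_iff by (cases L) fastforce+
  ultimately show ?thesis
    unfolding insertion_def using hook_valued_bump arms_bump assms col_hook_legs_bump bump_other_columns
    by simp
qed

lemma arm_bump_bump:
  assumes "candidates \<noteq> {}"
  shows "arm_bump (bump T) (Suc j) (Min candidates)"
proof
  show "hook_valued (bump T)" using hook_valued_bump .
  have "(Suc j, Min candidates) \<in># arms (bump T) + {#(j, a)#}"
    using arms_bump assms by simp
  then show "(Suc j, Min candidates) \<in># arms (bump T)" by auto
  show "p \<le> (Suc j, Min candidates)" if "p \<in># arms (bump T)" for p
  proof -
    have "p \<in># arms (bump T) + {#(j, a)#}" using that by simp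
    also have "arms (bump T) + {#(j, a)#} = arms T + {#(Suc j, Min candidates)#}"
      using arms_bump assms by simp
    finally have "p \<in># arms T + {#(Suc j, Min candidates)#}" .
    then show ?thesis using top_max by (cases p) fastforce
  qed
qed

lemma weak_chain_bump:
  assumes chain: "weak_chain (col_entries T) j a (Suc L)"
  shows "weak_chain (col_entries (bump T)) (Suc j) (Min candidates) L"
proof -
  obtain x where x: "x \<in> col_entries T (Suc j)" "a \<le> x" "weak_chain (col_entries T) (Suc j) x L"
    using chain by auto
  then have "Min candidates \<le> x" using Min_candidates_le candidates_def by simp
  moreover have "col_entries (bump T) i = col_entries T i" if "Suc j < i" for i
    using that bump_other_columns by (intro col_entries_cong) simp
  ultimately show ?thesis using weak_chain_mono[OF x(3) order_refl] by simp
qed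

lemma insertion_Suc:
  assumes nonempty: "candidates \<noteq> {}"
    and ins: "insertion (bump T) (Suc j) (Min candidates) n e"
  shows "insertion T j a (Suc n) e"
proof -
  let ?k = "Min candidates" and ?F = "(bump ^^ n) (bump T)"
  have F: "(bump ^^ Suc n) T = ?F" by (simp only: funpow_Suc_right comp_def)
  have ins': "first_new_cell (bump T) n e" "snd e = Suc j + n" "hook_valued ?F"
    "arms ?F + {#(Suc j, ?k)#} = arms (bump T)"
    "weak_chain (col_hook_legs ?F) (Suc j) ?k n"
    "\<And>x. x \<in> col_hook_legs (bump T) (Suc j) \<Longrightarrow> x \<le> ?k \<Longrightarrow> x \<in> col_hook_legs ?F (Suc j)"
    "\<And>p. snd p < Suc j \<Longrightarrow> ?F p = bump T p"
    "\<And>L. weak_chain (col_entries (bump T)) (Suc j) ?k L \<Longrightarrow> L < n"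
    using ins unfolding insertion_def by blast+
  have arms1: "arms (bump T) + {#(j, a)#} = arms T + {#(Suc j, ?k)#}"
    using arms_bump nonempty by simp
  have a_le_k: "a \<le> ?k" using a_le_Min_candidates[OF nonempty] .
  have col_j: "col_hook_legs ?F j = col_hook_legs (bump T) j"
    using ins'(7) by (intro col_hook_legs_cong) simp
  have "bump T \<noteq> T" using arms1 by auto
  then have "first_new_cell T (Suc n) e"
    using first_new_cell_Suc ins'(1) dom_bump target_in_dom_iff nonempty by (simp add: insert_absorb)
  moreover have "arms ?F + {#(j, a)#} = arms T"
  proof -
    have "arms ?F + {#(j, a)#} + {#(Suc j, ?k)#} = arms (bump T) + {#(j, a)#}"
      by (simp add: ins'(4)[symmetric] add_mset_commute)
    also have "\<dots> = arms T + {#(Suc j, ?k)#}" by (rule arms1)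
    finally show ?thesis by simp
  qed
  moreover have "weak_chain (col_hook_legs ?F) j a (Suc n)"
    using ins'(6)[OF a_in_col_hook_legs_bump a_le_k] weak_chain_mono[OF ins'(5) order_refl a_le_k] by auto
  moreover have "x \<in> col_hook_legs ?F j" if "x \<in> col_hook_legs T j" "x \<le> a" for x
    using col_hook_legs_bump[OF that] col_j by simp
  moreover have "L < Suc n" if "weak_chain (col_entries T) j a L" for L
    using that weak_chain_bump ins'(8) by (cases L) fastforce+
  ultimately show ?thesis
    unfolding insertion_def F using ins'(2,3,7) bump_other_columns by auto
qed

end

lemma insertion_exists:
  assumes "arm_bump T j a"
  shows "\<exists>n e. insertion T j a n e"
proof -
  have fin: "finite (dom T)" using arm_bump.finite_dom[OF assms] .
  define m where "m = Max (snd ` dom T)"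
  have "\<forall>p\<in>dom T. snd p \<le> j + m"
    unfolding m_def using fin by (simp add: trans_le_add2)
  then show ?thesis
    using assms
  proof (induction m arbitrary: T j a rule: less_induct)
    case (less m)
    interpret arm_bump T j a by (rule less.prems(2))
    show ?case
    proof (cases "candidates = {}")
      case True
      then show ?thesis using insertion_fresh by blast
    next
      case False
      then obtain r g where "T (r, Suc j) = Some g" using candidatesD by blast
      then have "(r, Suc j) \<in> dom T" by blast
      with less.prems(1) have "snd (r, Suc j) \<le> j + m" by (rule bspec)
      then have m: "Suc j + (m - 1) = j + m" "m - 1 < m" by auto
      have "\<forall>p\<in>dom (bump T). snd p \<le> Suc j + (m - 1)"
        using less.prems(1) dom_bump target_in_dom_iff False m(1) by (auto simp: insert_absorb)
      then obtain n e where "insertion (bump T) (Suc j) (Min candidates) n e"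
        using less.IH[OF m(2)] arm_bump_bump[OF False] by blast
      then show ?thesis using insertion_Suc[OF False] by blast
    qed
  qed
qed

section \<open>The recording tableau\<close>

lemma arm_bump_top_arm:
  assumes "hook_valued P" "arms P \<noteq> {#}" "top_arm P = (c, M)"
  shows "arm_bump P c M"
proof
  show "hook_valued P" by (rule assms(1))
  show "(c, M) \<in># arms P" using top_arm_mem[OF assms(2)] assms(3) by simp
  show "p \<le> (c, M)" if "p \<in># arms P" for p using le_top_arm[OF that] assms(3) by simp
qed

lemma unc_step_insertion:
  assumes "hook_valued P" "arms P \<noteq> {#}" "top_arm P = (c, M)" "insertion P c M n e"
  shows "unc_step (P, Q) = ((bump ^^ n) P, Q(e \<mapsto> int n))"
proof -
  have first: "first_new_cell P n e" and e: "snd e = c + n"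
    using assms(4) unfolding insertion_def by blast+
  have "(THE x. x \<in> dom ((bump ^^ n) P) \<and> x \<notin> dom P) = e"
    using first unfolding first_new_cell_def by auto
  moreover have "bump_col P = c"
    using arm_bump.bump_col_eq[OF arm_bump_top_arm[OF assms(1-3)]] .
  ultimately show ?thesis
    unfolding unc_step_def Let_def using e by (simp add: unc_ins_eq[OF first])
qed

definition flagged_increasing :: "qtab \<Rightarrow> bool" where
  "flagged_increasing Q \<longleftrightarrow> (\<forall>p v. Q p = Some v \<longrightarrow> 0 < v \<and> v \<le> int (snd p) - 1)
     \<and> (\<forall>r c c' v w. Q (r, c) = Some v \<longrightarrow> Q (r, c') = Some w \<longrightarrow> c < c' \<longrightarrow> v < w)
     \<and> (\<forall>r r' c v w. Q (r, c) = Some v \<longrightarrow> Q (r', c) = Some w \<longrightarrow> r < r' \<longrightarrow> v < w)"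

lemma flagged_increasing_range:
  "flagged_increasing Q \<Longrightarrow> Q p = Some v \<Longrightarrow> 0 < v \<and> v \<le> int (snd p) - 1"
  unfolding flagged_increasing_def by blast

lemma flagged_increasing_fun_upd:
  assumes Q: "flagged_increasing Q" and w: "0 < w" "w \<le> int c - 1"
    and row: "\<And>c' v. Q (r, c') = Some v \<Longrightarrow> c' \<noteq> c \<Longrightarrow> c' < c \<and> v < w"
    and col: "\<And>r' v. Q (r', c) = Some v \<Longrightarrow> r' \<noteq> r \<Longrightarrow> r' < r \<and> v < w"
  shows "flagged_increasing (Q((r, c) \<mapsto> w))"
proof -
  have rows: "\<And>x y y' v v'. Q (x, y) = Some v \<Longrightarrow> Q (x, y') = Some v' \<Longrightarrow> y < y' \<Longrightarrow> v < v'"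
    and cols: "\<And>x x' y v v'. Q (x, y) = Some v \<Longrightarrow> Q (x', y) = Some v' \<Longrightarrow> x < x' \<Longrightarrow> v < v'"
    using Q unfolding flagged_increasing_def by blast+
  have "0 < v \<and> v \<le> int (snd p) - 1" if "(Q((r, c) \<mapsto> w)) p = Some v" for p v
    using that w flagged_increasing_range[OF Q, of p v] by (cases "p = (r, c)") auto
  moreover have "v < v'"
    if "(Q((r, c) \<mapsto> w)) (x, y) = Some v" "(Q((r, c) \<mapsto> w)) (x, y') = Some v'" "y < y'" for x y y' v v'
    using that row[of y v] row[of y' v'] rows[of x y v y' v'] by (auto split: if_splits)
  moreover have "v < v'"
    if "(Q((r, c) \<mapsto> w)) (x, y) = Some v" "(Q((r, c) \<mapsto> w)) (x', y) = Some v'" "x < x'" for x x' y v v'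
    using that col[of x v] col[of x' v'] cols[of x y v x' v'] by (auto split: if_splits)
  ultimately show ?thesis unfolding flagged_increasing_def by blast
qed

text \<open>An entry \<open>v\<close> of the recording tableau in column \<open>c\<close> records an insertion that started
  from an arm in column \<open>c - v\<close>. These starting columns never increase, and an insertion starting
  in the column of the current top arm is longer than every earlier one that started there, as
  witnessed by a chain of entries of \<open>P\<close>.\<close>

definition recorded_paths_bounded :: "tab \<Rightarrow> qtab \<Rightarrow> bool" where
  "recorded_paths_bounded P Q \<longleftrightarrow> (\<forall>r c v. Q (r, c) = Some v \<longrightarrow>
     int (fst (top_arm P)) \<le> int c - v
     \<and> (int (fst (top_arm P)) = int c - v
          \<longrightarrow> weak_chain (col_entries P) (fst (top_arm P)) (snd (top_arm P)) (nat v)))"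

fun uncrowding_inv :: "nat list \<Rightarrow> tab \<times> qtab \<Rightarrow> bool" where
  "uncrowding_inv lam (P, Q) \<longleftrightarrow> hook_valued P \<and> young_cells lam \<subseteq> dom P
     \<and> dom Q = dom P - young_cells lam \<and> flagged_increasing Q
     \<and> (arms P \<noteq> {#} \<longrightarrow> recorded_paths_bounded P Q)"

lemma recorded_entry_less:
  assumes bounded: "recorded_paths_bounded P Q" and top: "top_arm P = (c, M)"
    and ins: "insertion P c M n e" and entry: "Q (r, y) = Some v" "0 < v" "y \<le> snd e"
  shows "v < int n"
proof -
  have start: "int c \<le> int y - v"
    and chain: "int c = int y - v \<Longrightarrow> weak_chain (col_entries P) c M (nat v)"
    using bounded entry(1) top unfolding recorded_paths_bounded_def by auto
  have e: "snd e = c + n" and longest: "\<And>L. weak_chain (col_entries P) c M L \<Longrightarrow> L < n"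
    using ins unfolding insertion_def by auto
  show ?thesis
  proof (cases "int c = int y - v")
    case True
    then show ?thesis using longest[OF chain] entry(2) by linarith
  next
    case False
    then show ?thesis using start entry(3) e by linarith
  qed
qed

lemma recorded_paths_bounded_step:
  assumes bounded: "recorded_paths_bounded P Q" and top: "top_arm P = (c, M)"
    and ins: "insertion P c M n e" and ne: "arms ((bump ^^ n) P) \<noteq> {#}"
  shows "recorded_paths_bounded ((bump ^^ n) P) (Q(e \<mapsto> int n))"
  unfolding recorded_paths_bounded_def
proof (intro allI impI)
  let ?F = "(bump ^^ n) P"
  obtain c' M' where top': "top_arm ?F = (c', M')" by fastforce
  have e: "snd e = c + n" and arms: "arms ?F + {#(c, M)#} = arms P"
    and chain: "weak_chain (col_hook_legs ?F) c M n"
    and longest: "\<And>L. weak_chain (col_entries P) c M L \<Longrightarrow> L < n"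
    using ins unfolding insertion_def by auto
  have "top_arm ?F \<in># arms P" using top_arm_mem[OF ne] arms by (metis union_iff)
  then have "(c', M') \<le> (c, M)" using le_top_arm top top' by metis
  then have c': "c' \<le> c" "c' = c \<Longrightarrow> M' \<le> M" by auto
  fix r y v assume entry: "(Q(e \<mapsto> int n)) (r, y) = Some v"
  have "int c \<le> int y - v \<and> (int c = int y - v \<longrightarrow> nat v \<le> n)"
  proof (cases "(r, y) = e")
    case False
    then have "Q (r, y) = Some v" using entry by simp
    then show ?thesis
      using bounded top longest unfolding recorded_paths_bounded_def by (auto intro: less_imp_le)
  qed (use entry e in auto)
  then have start: "int c \<le> int y - v" and short: "int c = int y - v \<Longrightarrow> nat v \<le> n"
    by auto
  show "int (fst (top_arm ?F)) \<le> int y - v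
    \<and> (int (fst (top_arm ?F)) = int y - v
         \<longrightarrow> weak_chain (col_entries ?F) (fst (top_arm ?F)) (snd (top_arm ?F)) (nat v))"
  proof (intro conjI impI)
    show "int (fst (top_arm ?F)) \<le> int y - v" using top' c'(1) start by simp
    assume "int (fst (top_arm ?F)) = int y - v"
    then have "c' = c" "int c = int y - v" using top' c'(1) start by auto
    then show "weak_chain (col_entries ?F) (fst (top_arm ?F)) (snd (top_arm ?F)) (nat v)"
      using weak_chain_mono[OF chain short c'(2)] col_hook_legs_subset top' by auto
  qed
qed

lemma flagged_increasing_step:
  assumes P: "hook_valued P" and ne: "arms P \<noteq> {#}" and top: "top_arm P = (c, M)"
    and ins: "insertion P c M n (re, ce)"
    and Q: "flagged_increasing Q" and bounded: "recorded_paths_bounded P Q" and dQ: "dom Q \<subseteq> dom P"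
  shows "flagged_increasing (Q((re, ce) \<mapsto> int n))"
proof (rule flagged_increasing_fun_upd[OF Q])
  have first: "first_new_cell P n (re, ce)" and e: "ce = c + n"
    and F: "hook_valued ((bump ^^ n) P)"
    using ins unfolding insertion_def by auto
  have n: "1 \<le> n" and e_new: "(re, ce) \<notin> dom P" and dom_F: "(re, ce) \<in> dom ((bump ^^ n) P)"
    using first unfolding first_new_cell_def by auto
  have c: "1 \<le> c" using arm_bump.col_pos[OF arm_bump_top_arm[OF P ne top]] .
  have re: "1 \<le> re" using diagram_pos[OF hook_valued_diagram[OF F] dom_F] by simp
  have corner: "\<not> (re \<le> r' \<and> ce \<le> c')" if "(r', c') \<in> dom Q" for r' c'
  proof -
    have "(r', c') \<in> dom P" using that dQ by blast
    from diagram_notin_northeast[OF hook_valued_diagram[OF P] e_new re _ this] e n show ?thesis by simp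
  qed
  have less: "v < int n" if entry: "Q (r, y) = Some v" "y \<le> ce" for r y v
    using recorded_entry_less[OF bounded top ins entry(1)] flagged_increasing_range[OF Q entry(1)] entry(2)
    by simp
  show "0 < int n" "int n \<le> int ce - 1" using n e c by auto
  show "y < ce \<and> v < int n" if entry: "Q (re, y) = Some v" "y \<noteq> ce" for y v
    using corner[of re y] entry less[OF entry(1)] by (auto simp: domI)
  show "r < re \<and> v < int n" if entry: "Q (r, ce) = Some v" "r \<noteq> re" for r v
    using corner[of r ce] entry less[OF entry(1)] by (auto simp: domI)
qed

lemma uncrowding_inv_step:
  assumes inv: "uncrowding_inv lam (P, Q)" and ne: "arms P \<noteq> {#}"
  obtains P' Q' where "unc_step (P, Q) = (P', Q')" "uncrowding_inv lam (P', Q')"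
    "size (arms P') + 1 = size (arms P)"
proof -
  have P: "hook_valued P" "young_cells lam \<subseteq> dom P" and dQ: "dom Q = dom P - young_cells lam"
    and Q: "flagged_increasing Q" and bounded: "recorded_paths_bounded P Q"
    using inv ne by auto
  obtain c M where top: "top_arm P = (c, M)" by fastforce
  obtain n re ce where ins: "insertion P c M n (re, ce)"
    using insertion_exists[OF arm_bump_top_arm[OF P(1) ne top]] by fastforce
  let ?F = "(bump ^^ n) P" and ?Q' = "Q((re, ce) \<mapsto> int n)"
  have F: "hook_valued ?F" and arms: "arms ?F + {#(c, M)#} = arms P"
    and e_new: "(re, ce) \<notin> dom P" and dom_F: "dom ?F = insert (re, ce) (dom P)"
    using ins unfolding insertion_def first_new_cell_def by blast+
  have "flagged_increasing ?Q'"
    using flagged_increasing_step[OF P(1) ne top ins Q bounded] dQ by blast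
  moreover have "recorded_paths_bounded ?F ?Q'" if "arms ?F \<noteq> {#}"
    using recorded_paths_bounded_step[OF bounded top ins that] .
  moreover have "dom ?Q' = dom ?F - young_cells lam" using dQ dom_F e_new P(2) by auto
  moreover have "young_cells lam \<subseteq> dom ?F" using P(2) dom_F by auto
  moreover have "size (arms ?F) + 1 = size (arms P)"
    using arg_cong[OF arms, of size] by simp
  ultimately show thesis
    using that[of ?F ?Q'] unc_step_insertion[OF P(1) ne top ins] F by simp
qed

lemma uncrowding_inv_funpow:
  assumes "uncrowding_inv lam (P, Q)" "i \<le> size (arms P)"
  shows "uncrowding_inv lam ((unc_step ^^ i) (P, Q))"
  using assms
proof (induction i arbitrary: P Q)
  case (Suc i)
  then have "arms P \<noteq> {#}" by auto
  then obtain P' Q' where step: "unc_step (P, Q) = (P', Q')" "uncrowding_inv lam (P', Q')"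
    "size (arms P') + 1 = size (arms P)"
    using uncrowding_inv_step[OF Suc.prems(1)] by blast
  have "(unc_step ^^ Suc i) (P, Q) = (unc_step ^^ i) (P', Q')"
    using step(1) by (simp only: funpow_Suc_right comp_def)
  then show ?case using Suc.IH[OF step(2)] step(3) Suc.prems(2) by simp
qed simp

lemma uncrowding_inv_uncrowd:
  assumes "partition lam" "is_HVT lam T"
  shows "uncrowding_inv lam (uncrowd T)"
proof -
  have T: "hook_valued T" using is_HVT_hook_valued[OF assms] .
  have "dom T = young_cells lam" using assms(2) unfolding is_HVT_def by blast
  then have "uncrowding_inv lam (T, Map.empty)"
    using T by (simp add: flagged_increasing_def recorded_paths_bounded_def)
  then show ?thesis
    unfolding uncrowd_def arm_excess_eq_size[OF hook_valued_finite[OF T]]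
    by (rule uncrowding_inv_funpow) simp
qed

lemma uncrowding_inv_col_flagged_increasing:
  assumes lam: "partition lam" and inv: "uncrowding_inv lam (P, Q)"
  obtains mu where "dom P = young_cells mu" "col_flagged_increasing lam mu Q"
proof -
  have P: "hook_valued P" and young: "young_cells lam \<subseteq> dom P"
    and dQ: "dom Q = dom P - young_cells lam" and Q: "flagged_increasing Q"
    using inv by simp_all
  have "(r, 1) \<in> young_cells lam" if "(r, 1) \<in> dom P" for r
  proof (rule ccontr)
    assume "(r, 1) \<notin> young_cells lam"
    then have "(r, 1) \<in> dom Q" using that dQ by simp
    then obtain v where "Q (r, 1) = Some v" by auto
    then show False using flagged_increasing_range[OF Q] by fastforce
  qed
  then have "{r. (r, 1) \<in> dom P} = {r. (r, 1) \<in> young_cells lam}"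
    using young by auto
  then have "{r. (r, 1) \<in> dom P} = {1..length lam}"
    using young_cells_first_column[OF lam] by simp
  then obtain mu where mu: "partition mu" "length mu = length lam" "dom P = young_cells mu"
    by (rule diagram_eq_young_cells[OF hook_valued_diagram[OF P]])
  moreover have "young_cells lam \<subseteq> young_cells mu" "dom Q = young_cells mu - young_cells lam"
    "length lam = length mu"
    using young dQ mu(2,3) by simp_all
  ultimately have "col_flagged_increasing lam mu Q"
    using lam Q unfolding col_flagged_increasing_def flagged_increasing_def
    by (elim conjE) (intro conjI; assumption)
  with mu that show thesis by blast
qed

theorem lemma3p9:
  assumes "partition lam" and "is_HVT lam T"
  shows "\<exists>mu. dom (P_of T) = young_cells mu \<and> col_flagged_increasing lam mu (Q_of T)"
proof -
  obtain P Q where PQ: "uncrowd T = (P, Q)" by fastforce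
  then have "uncrowding_inv lam (P, Q)" using uncrowding_inv_uncrowd[OF assms] by simp
  then obtain mu where "dom P = young_cells mu" "col_flagged_increasing lam mu Q"
    by (rule uncrowding_inv_col_flagged_increasing[OF assms(1)])
  then show ?thesis using PQ unfolding P_of_def Q_of_def by auto
qed

end
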